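(* Let $G$ be a cograph with (canonical) cotree $T_G$, and let $c$ be an inner vertex of $T_G$ with label $+$. Then the cograph $T_G(c)$ satisfies property $\mathcal{P}$ if and only if $c$ has at least two children in $T_G$ and either (i) there exist at least two children of $c$ in $T_G$ each of which is either a leaf or a vertex with label $\mathcal{R}$, or (ii) one of the children of $c$ is a vertex $u$ with label $\mathcal{R}$ such that $T_G(u)$ is the disjoint union of two complete graphs.
   Context: All graphs are finite and simple. For a graph $H$ and $v\in V(H)$, $N_H[v]$ denotes the closed neighbourhood of $v$. A set $D\subseteq V(H)$ is dominating if every vertex outside $D$ has a neighbour in $D$; $\gamma(H)$ is the minimum size of a dominating set. A dominating set $S$ is a secure dominating set if for every $x\in V(H)\setminus S$ there is a neighbour $y\in S$ of $x$ such that $(S\cup\{x\})\setminus\{y\}$ is dominating; $\gamma_s(H)$ is the minimum size of a secure dominating set. The join $G_1+G_2$ of disjoint graphs is their disjoint union together with all edges between $V(G_1)$ and $V(G_2)$. Cographs are defined recursively: $K_1$ is a cograph; the complement of a cograph is a cograph; the disjoint union of $k\ge 2$ cographs is a cograph. A cograph $G$ is represented by its cotree $T_G$: a rooted tree whose leaves are the vertices of $G$ and whose inner vertices are labelled $\cup$ or $+$, where the graph corresponding to an inner vertex is the disjoint union (label $\cup$) or the join (label $+$) of the graphs corresponding to its children; in this cotree the labels alternate, i.e. every child of a $\cup$-vertex is a leaf or a $+$-vertex, and every child of a $+$-vertex is a leaf or a $\cup$-vertex. For a vertex $v$ of $T_G$, $T_G(v)$ denotes the subgraph of $G$ induced by the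 leaves of the subtree of $T_G$ rooted at $v$. A vertex $u$ of $T_G$ has label $\mathcal{R}$ if (a) $u$ has label $\cup$, (b) $u$ has exactly two children $x,y$ in $T_G$, (c) $\gamma(T_G(x))=1$, and (d) $\gamma_s(T_G(y))=1$. A cograph $H$ which is the join of cographs $H_1,\dots,H_\ell$ with $\ell\ge 2$ satisfies property $\mathcal{P}$ if there exist two distinct vertices $x,y\in V(H)$ such that $\{x,y\}$ is a dominating set of $H$ and each of $V(H)\setminus N_H[x]$ and $V(H)\setminus N_H[y]$ is either empty or a clique (a set of vertices inducing a complete graph). *)

theory Defs
  imports Main
begin

text \<open>A (finite simple) graph is given by a vertex set V and an adjacency
relation adj; only the values of adj on V matter.\<close>

definition closed_nbhd :: "'a set \<Rightarrow> ('a \<Rightarrow> 'a \<Rightarrow> bool) \<Rightarrow> 'a \<Rightarrow> 'a set" where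
  "closed_nbhd V adj v = insert v {u \<in> V. adj v u}"

definition dominating :: "'a set \<Rightarrow> ('a \<Rightarrow> 'a \<Rightarrow> bool) \<Rightarrow> 'a set \<Rightarrow> bool" where
  "dominating V adj D \<longleftrightarrow> D \<subseteq> V \<and> (\<forall>x \<in> V - D. \<exists>y \<in> D. adj x y)"

definition domination_number :: "'a set \<Rightarrow> ('a \<Rightarrow> 'a \<Rightarrow> bool) \<Rightarrow> nat" where
  "domination_number V adj = Min {card D | D. dominating V adj D}"

definition secure_dominating :: "'a set \<Rightarrow> ('a \<Rightarrow> 'a \<Rightarrow> bool) \<Rightarrow> 'a set \<Rightarrow> bool" where
  "secure_dominating V adj S \<longleftrightarrow> dominating V adj S \<and>
     (\<forall>x \<in> V - S. \<exists>y \<in> S. adj x y \<and> dominating V adj ((S \<union> {x}) - {y}))"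

definition secure_domination_number :: "'a set \<Rightarrow> ('a \<Rightarrow> 'a \<Rightarrow> bool) \<Rightarrow> nat" where
  "secure_domination_number V adj = Min {card S | S. secure_dominating V adj S}"

definition is_clique :: "'a set \<Rightarrow> ('a \<Rightarrow> 'a \<Rightarrow> bool) \<Rightarrow> 'a set \<Rightarrow> bool" where
  "is_clique V adj C \<longleftrightarrow> C \<subseteq> V \<and> (\<forall>a \<in> C. \<forall>b \<in> C. a \<noteq> b \<longrightarrow> adj a b)"

definition two_cliques_union :: "'a set \<Rightarrow> ('a \<Rightarrow> 'a \<Rightarrow> bool) \<Rightarrow> bool" where
  "two_cliques_union V adj \<longleftrightarrow> (\<exists>A B. A \<noteq> {} \<and> B \<noteq> {} \<and> A \<inter> B = {} \<and> A \<union> B = V \<and>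
      is_clique V adj A \<and> is_clique V adj B \<and> (\<forall>a \<in> A. \<forall>b \<in> B. \<not> adj a b))"

inductive cograph :: "'a set \<Rightarrow> ('a \<Rightarrow> 'a \<Rightarrow> bool) \<Rightarrow> bool" where
  single: "\<not> adj v v \<Longrightarrow> cograph {v} adj"
| compl: "cograph V adj \<Longrightarrow> (\<forall>x \<in> V. \<forall>y \<in> V. adj' x y \<longleftrightarrow> x \<noteq> y \<and> \<not> adj x y)
           \<Longrightarrow> cograph V adj'"
| disj_union: "length Vs \<ge> 2 \<Longrightarrow> (\<forall>i < length Vs. Vs ! i \<noteq> {} \<and> cograph (Vs ! i) adj)
           \<Longrightarrow> (\<forall>i < length Vs. \<forall>j < length Vs. i \<noteq> j \<longrightarrow> Vs ! i \<inter> Vs ! j = {})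
           \<Longrightarrow> (\<forall>i < length Vs. \<forall>j < length Vs. i \<noteq> j \<longrightarrow>
                  (\<forall>x \<in> Vs ! i. \<forall>y \<in> Vs ! j. \<not> adj x y))
           \<Longrightarrow> cograph (\<Union>(set Vs)) adj"

definition is_join_of_cographs :: "'a set \<Rightarrow> ('a \<Rightarrow> 'a \<Rightarrow> bool) \<Rightarrow> bool" where
  "is_join_of_cographs V adj \<longleftrightarrow> (\<exists>Vs. length Vs \<ge> 2 \<and> \<Union>(set Vs) = V \<and>
      (\<forall>i < length Vs. Vs ! i \<noteq> {} \<and> cograph (Vs ! i) adj) \<and>
      (\<forall>i < length Vs. \<forall>j < length Vs. i \<noteq> j \<longrightarrow> Vs ! i \<inter> Vs ! j = {}) \<and>
      (\<forall>i < length Vs. \<forall>j < length Vs. i \<noteq> j \<longrightarrow> (\<forall>x \<in> Vs ! i. \<forall>y \<in> Vs ! j. adj x y)))"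

definition property_P :: "'a set \<Rightarrow> ('a \<Rightarrow> 'a \<Rightarrow> bool) \<Rightarrow> bool" where
  "property_P V adj \<longleftrightarrow> is_join_of_cographs V adj \<and>
     (\<exists>x \<in> V. \<exists>y \<in> V. x \<noteq> y \<and> dominating V adj {x, y} \<and>
        (V - closed_nbhd V adj x = {} \<or> is_clique V adj (V - closed_nbhd V adj x)) \<and>
        (V - closed_nbhd V adj y = {} \<or> is_clique V adj (V - closed_nbhd V adj y)))"

text \<open>Inner vertices: Node True cs has label +, Node False cs has label \<union>.\<close>
datatype 'a cotree = Leaf 'a | Node bool "'a cotree list"

fun leaves :: "'a cotree \<Rightarrow> 'a set" where
  "leaves (Leaf v) = {v}"
| "leaves (Node b cs) = (\<Union>c \<in> set cs. leaves c)"

text \<open>Adjacency in the graph T(v) represented by a (sub)cotree.\<close>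
fun cadj :: "'a cotree \<Rightarrow> 'a \<Rightarrow> 'a \<Rightarrow> bool" where
  "cadj (Leaf v) x y = False"
| "cadj (Node b cs) x y = ((\<exists>c \<in> set cs. cadj c x y) \<or>
     (b \<and> (\<exists>i < length cs. \<exists>j < length cs. i \<noteq> j \<and> x \<in> leaves (cs ! i) \<and> y \<in> leaves (cs ! j))))"

fun is_join_node :: "'a cotree \<Rightarrow> bool" where
  "is_join_node (Leaf v) = False"
| "is_join_node (Node b cs) = b"

fun is_union_node :: "'a cotree \<Rightarrow> bool" where
  "is_union_node (Leaf v) = False"
| "is_union_node (Node b cs) = (\<not> b)"

fun is_leaf :: "'a cotree \<Rightarrow> bool" where
  "is_leaf (Leaf v) = True"
| "is_leaf (Node b cs) = False"

fun children :: "'a cotree \<Rightarrow> 'a cotree list" where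
  "children (Leaf v) = []"
| "children (Node b cs) = cs"

text \<open>Canonical cotree: every inner vertex has at least two children, labels alternate,
and the leaf sets of distinct children are disjoint (so the leaves are distinct vertices).\<close>
fun canonical_cotree :: "'a cotree \<Rightarrow> bool" where
  "canonical_cotree (Leaf v) = True"
| "canonical_cotree (Node b cs) = (length cs \<ge> 2 \<and>
     (\<forall>c \<in> set cs. canonical_cotree c \<and> (is_leaf c \<or> is_join_node c \<noteq> b)) \<and>
     (\<forall>i < length cs. \<forall>j < length cs. i \<noteq> j \<longrightarrow> leaves (cs ! i) \<inter> leaves (cs ! j) = {}))"

text \<open>All vertices of the cotree (each vertex identified with the subtree rooted at it).\<close>
fun subtrees :: "'a cotree \<Rightarrow> 'a cotree set" where
  "subtrees (Leaf v) = {Leaf v}"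
| "subtrees (Node b cs) = insert (Node b cs) (\<Union>c \<in> set cs. subtrees c)"

abbreviation gamma_T :: "'a cotree \<Rightarrow> nat" where
  "gamma_T t \<equiv> domination_number (leaves t) (cadj t)"

abbreviation gamma_s_T :: "'a cotree \<Rightarrow> nat" where
  "gamma_s_T t \<equiv> secure_domination_number (leaves t) (cadj t)"

definition label_R :: "'a cotree \<Rightarrow> bool" where
  "label_R u \<longleftrightarrow> is_union_node u \<and> length (children u) = 2 \<and>
     (\<exists>i < 2. \<exists>j < 2. i \<noteq> j \<and> gamma_T (children u ! i) = 1 \<and> gamma_s_T (children u ! j) = 1)"

end

theory Submission
  imports Defs
begin

text \<open>In a join vertex c every vertex is adjacent to all vertices outside its own child.
Hence the non-neighbourhood of a vertex x of T(c) is its non-neighbourhood inside the child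
containing x, and two vertices from different children always dominate T(c). So a pair as
required by property P consists either of two vertices from different children, each of which
has a clique as non-neighbourhood within its child, or of such a dominating pair inside a
single child. The children are leaves or union vertices. In a union vertex u the
non-neighbourhood of x contains all children other than the one of x, and these are pairwise
non-adjacent; so it is a clique exactly when u has two children, x is universal in its own child
and the other child is complete. As gamma = 1 means that there is a universal vertex and
gamma_s = 1 means completeness, this is label R. Finally, a dominating pair of u meets both
children of u, which forces both of them to be complete.\<close>

lemma distinct_length_2_iff:
  assumes "distinct xs"
  shows "length xs = 2 \<and> a \<in> set xs \<and> b \<in> set xs \<and> a \<noteq> b \<longleftrightarrow> set xs = {a, b} \<and> a \<noteq> b"
proof
  assume h: "length xs = 2 \<and> a \<in> set xs \<and> b \<in> set xs \<and> a \<noteq> b"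
  then have "{a, b} \<subseteq> set xs" "card {a, b} = card (set xs)"
    using distinct_card[OF assms] by auto
  then have "{a, b} = set xs" by (intro card_subset_eq) auto
  with h show "set xs = {a, b} \<and> a \<noteq> b" by simp
next
  assume h: "set xs = {a, b} \<and> a \<noteq> b"
  then have "length xs = card {a, b}" using distinct_card[OF assms] by simp
  with h show "length xs = 2 \<and> a \<in> set xs \<and> b \<in> set xs \<and> a \<noteq> b" by simp
qed

lemma ex_two_nth_iff:
  assumes "distinct xs"
  shows "(\<exists>i < length xs. \<exists>j < length xs. i \<noteq> j \<and> P (xs ! i) \<and> Q (xs ! j)) \<longleftrightarrow>
    (\<exists>a \<in> set xs. \<exists>b \<in> set xs. a \<noteq> b \<and> P a \<and> Q b)"
proof
  assume "\<exists>i < length xs. \<exists>j < length xs. i \<noteq> j \<and> P (xs ! i) \<and> Q (xs ! j)"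
  then obtain i j where "i < length xs" "j < length xs" "i \<noteq> j" "P (xs ! i)" "Q (xs ! j)"
    by blast
  moreover have "xs ! i \<noteq> xs ! j" using calculation assms by (simp add: nth_eq_iff_index_eq)
  ultimately show "\<exists>a \<in> set xs. \<exists>b \<in> set xs. a \<noteq> b \<and> P a \<and> Q b" by (meson nth_mem)
next
  assume "\<exists>a \<in> set xs. \<exists>b \<in> set xs. a \<noteq> b \<and> P a \<and> Q b"
  then obtain i j where "i < length xs" "j < length xs" "xs ! i \<noteq> xs ! j" "P (xs ! i)" "Q (xs ! j)"
    by (metis in_set_conv_nth)
  then show "\<exists>i < length xs. \<exists>j < length xs. i \<noteq> j \<and> P (xs ! i) \<and> Q (xs ! j)" by auto
qed

section \<open>Dominating pairs with clique non-neighbourhoods\<close>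

abbreviation non_nbhd :: "'a set \<Rightarrow> ('a \<Rightarrow> 'a \<Rightarrow> bool) \<Rightarrow> 'a \<Rightarrow> 'a set" where
  "non_nbhd V adj x \<equiv> V - closed_nbhd V adj x"

abbreviation clique_non_nbhd :: "'a set \<Rightarrow> ('a \<Rightarrow> 'a \<Rightarrow> bool) \<Rightarrow> 'a \<Rightarrow> bool" where
  "clique_non_nbhd V adj x \<equiv> is_clique V adj (non_nbhd V adj x)"

definition clique_dominating_pair :: "'a set \<Rightarrow> ('a \<Rightarrow> 'a \<Rightarrow> bool) \<Rightarrow> 'a \<Rightarrow> 'a \<Rightarrow> bool" where
  "clique_dominating_pair V adj x y \<longleftrightarrow> x \<noteq> y \<and> dominating V adj {x, y} \<and>
     clique_non_nbhd V adj x \<and> clique_non_nbhd V adj y"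

lemma property_P_iff:
  "property_P V adj \<longleftrightarrow> is_join_of_cographs V adj \<and> (\<exists>x y. clique_dominating_pair V adj x y)"
proof -
  have empty_or_clique: "C = {} \<or> is_clique V adj C \<longleftrightarrow> is_clique V adj C" for C
    by (auto simp: is_clique_def)
  have "dominating V adj {x, y} \<Longrightarrow> x \<in> V \<and> y \<in> V" for x y
    by (simp add: dominating_def)
  then show ?thesis
    unfolding property_P_def clique_dominating_pair_def empty_or_clique by metis
qed

lemma is_clique_subset: "is_clique V adj C \<Longrightarrow> C' \<subseteq> C \<Longrightarrow> is_clique V adj C'"
  unfolding is_clique_def by blast

lemma Min_card_eq_1_iff:
  assumes "finite V" "P V" "\<And>D. P D \<Longrightarrow> D \<subseteq> V \<and> D \<noteq> {}"
  shows "Min {card D | D. P D} = 1 \<longleftrightarrow> (\<exists>v. P {v})"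
proof -
  let ?S = "{card D | D. P D}"
  have S: "?S \<subseteq> {1..card V}"
  proof
    fix n assume "n \<in> ?S"
    then obtain D where D: "P D" "n = card D" by blast
    then have "D \<subseteq> V" "D \<noteq> {}" using assms(3) by auto
    moreover have "finite D" using \<open>D \<subseteq> V\<close> assms(1) by (rule finite_subset)
    ultimately show "n \<in> {1..card V}"
      using D(2) assms(1) by (simp add: Suc_leI card_gt_0_iff card_mono)
  qed
  then have fin: "finite ?S" by (rule finite_subset) simp
  have ne: "?S \<noteq> {}" using assms(2) by blast
  have "Min ?S = 1 \<longleftrightarrow> 1 \<in> ?S"
  proof
    assume "1 \<in> ?S"
    then have "Min ?S \<le> 1" using fin by simp
    moreover have "1 \<le> Min ?S" using Min_in[OF fin ne] S by auto
    ultimately show "Min ?S = 1" by simp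
  qed (use Min_in[OF fin ne] in simp)
  also have "\<dots> \<longleftrightarrow> (\<exists>v. P {v})"
  proof
    assume "1 \<in> ?S"
    then obtain D where "P D" "card D = 1" by auto
    then show "\<exists>v. P {v}" by (metis card_1_singletonE)
  qed force
  finally show ?thesis .
qed

lemma domination_number_eq_1_iff:
  assumes "finite V" "V \<noteq> {}"
  shows "domination_number V adj = 1 \<longleftrightarrow> (\<exists>v\<in>V. \<forall>z\<in>V. z \<noteq> v \<longrightarrow> adj z v)"
  unfolding domination_number_def
  by (subst Min_card_eq_1_iff) (use assms in \<open>auto simp: dominating_def\<close>)

lemma secure_domination_number_eq_1_iff:
  assumes "finite V" "V \<noteq> {}"
  shows "secure_domination_number V adj = 1 \<longleftrightarrow> is_clique V adj V"
proof -
  have "secure_domination_number V adj = 1 \<longleftrightarrow> (\<exists>v. secure_dominating V adj {v})"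
    unfolding secure_domination_number_def
    by (rule Min_card_eq_1_iff) (use assms in \<open>auto simp: secure_dominating_def dominating_def\<close>)
  also have "\<dots> \<longleftrightarrow> is_clique V adj V"
  proof
    assume "\<exists>v. secure_dominating V adj {v}"
    then obtain v where v: "secure_dominating V adj {v}" ..
    \<comment> \<open>every other vertex x can replace v, so {x} is dominating as well\<close>
    have "dominating V adj {x}" if "x \<in> V" for x
    proof (cases "x = v")
      case False
      with that v have "dominating V adj (({v} \<union> {x}) - {v})"
        unfolding secure_dominating_def by blast
      moreover have "({v} \<union> {x}) - {v} = {x}" using False by blast
      ultimately show ?thesis by simp
    qed (use v in \<open>simp add: secure_dominating_def\<close>)
    then show "is_clique V adj V"
      unfolding is_clique_def dominating_def by blast
  next
    assume clique: "is_clique V adj V"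
    obtain v where "v \<in> V" using assms(2) by blast
    have "dominating V adj {x}" if "x \<in> V" for x
      using clique that unfolding is_clique_def dominating_def by blast
    moreover have "({v} \<union> {x}) - {v} = {x}" if "x \<noteq> v" for x
      using that by blast
    ultimately have "secure_dominating V adj {v}"
      using clique \<open>v \<in> V\<close> unfolding secure_dominating_def is_clique_def by auto
    then show "\<exists>v. secure_dominating V adj {v}" ..
  qed
  finally show ?thesis .
qed

lemma two_cliques_union_imp_clique_dominating_pair:
  assumes "two_cliques_union V adj"
  shows "\<exists>x y. clique_dominating_pair V adj x y"
proof -
  obtain A B where AB: "A \<noteq> {}" "B \<noteq> {}" "A \<inter> B = {}" "A \<union> B = V"
    "is_clique V adj A" "is_clique V adj B"
    using assms unfolding two_cliques_union_def by blast
  obtain a b where ab: "a \<in> A" "b \<in> B" using AB(1,2) by blast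
  have "non_nbhd V adj a \<subseteq> B" "non_nbhd V adj b \<subseteq> A"
    using AB(4-6) ab unfolding is_clique_def by (auto simp: closed_nbhd_def)
  moreover have "dominating V adj {a, b}"
    using AB(4-6) ab unfolding is_clique_def dominating_def by blast
  moreover have "a \<noteq> b" using ab AB(3) by blast
  ultimately have "clique_dominating_pair V adj a b"
    unfolding clique_dominating_pair_def using AB(5,6) is_clique_subset by blast
  then show ?thesis by blast
qed

lemma cograph_irrefl: "cograph V adj \<Longrightarrow> x \<in> V \<Longrightarrow> \<not> adj x x"
  by (induction V adj arbitrary: x rule: cograph.induct) (auto simp: in_set_conv_nth)

lemma cograph_cong:
  assumes "cograph V adj" "\<And>x y. x \<in> V \<Longrightarrow> y \<in> V \<Longrightarrow> adj' x y = adj x y"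
  shows "cograph V adj'"
proof -
  have "cograph V (\<lambda>x y. x \<noteq> y \<and> \<not> adj x y)"
    by (rule cograph.compl[OF assms(1)]) simp
  then show ?thesis
    by (rule cograph.compl) (use assms cograph_irrefl[OF assms(1)] in auto)
qed

lemma cograph_if_join_of_cographs:
  assumes "is_join_of_cographs V adj"
  shows "cograph V adj"
proof -
  obtain Vs where Vs: "length Vs \<ge> 2" "\<Union>(set Vs) = V"
    "\<forall>i < length Vs. Vs ! i \<noteq> {} \<and> cograph (Vs ! i) adj"
    "\<forall>i < length Vs. \<forall>j < length Vs. i \<noteq> j \<longrightarrow> Vs ! i \<inter> Vs ! j = {}"
    "\<forall>i < length Vs. \<forall>j < length Vs. i \<noteq> j \<longrightarrow> (\<forall>x \<in> Vs ! i. \<forall>y \<in> Vs ! j. adj x y)"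
    using assms unfolding is_join_of_cographs_def by (elim exE conjE) (rule that)
  \<comment> \<open>the complement of a join is the disjoint union of the complements of its parts\<close>
  let ?co = "\<lambda>x y. x \<noteq> y \<and> \<not> adj x y"
  have parts: "cograph (Vs ! i) ?co" if "i < length Vs" for i
  proof -
    have "cograph (Vs ! i) adj" using Vs(3) that by simp
    then show ?thesis by (rule cograph.compl) simp
  qed
  have "cograph (\<Union>(set Vs)) ?co"
  proof (rule cograph.disj_union)
    show "\<forall>i<length Vs. Vs ! i \<noteq> {} \<and> cograph (Vs ! i) ?co"
      using Vs(3) parts by blast
    show "\<forall>i<length Vs. \<forall>j<length Vs. i \<noteq> j \<longrightarrow> (\<forall>x\<in>Vs ! i. \<forall>y\<in>Vs ! j. \<not> ?co x y)"
      using Vs(5) by blast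
  qed (fact Vs(1,4))+
  then have co: "cograph V ?co" by (simp only: Vs(2))
  have irrefl: "\<not> adj x x" if x: "x \<in> V" for x
  proof -
    obtain i where i: "i < length Vs" "x \<in> Vs ! i"
      using Vs(2) x by (auto simp: in_set_conv_nth)
    then have "cograph (Vs ! i) adj" using Vs(3) by simp
    from cograph_irrefl[OF this i(2)] show ?thesis .
  qed
  show ?thesis
    by (rule cograph.compl[OF co]) (use irrefl in auto)
qed

section \<open>Graphs of cotrees\<close>

abbreviation non_nbhd_T :: "'a cotree \<Rightarrow> 'a \<Rightarrow> 'a set" where
  "non_nbhd_T t x \<equiv> non_nbhd (leaves t) (cadj t) x"

abbreviation is_clique_T :: "'a cotree \<Rightarrow> 'a set \<Rightarrow> bool" where
  "is_clique_T t C \<equiv> is_clique (leaves t) (cadj t) C"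

abbreviation clique_non_nbhd_T :: "'a cotree \<Rightarrow> 'a \<Rightarrow> bool" where
  "clique_non_nbhd_T t x \<equiv> clique_non_nbhd (leaves t) (cadj t) x"

abbreviation clique_dominating_pair_T :: "'a cotree \<Rightarrow> 'a \<Rightarrow> 'a \<Rightarrow> bool" where
  "clique_dominating_pair_T t x y \<equiv> clique_dominating_pair (leaves t) (cadj t) x y"

lemma finite_leaves: "finite (leaves t)"
  by (induction t) auto

lemma leaves_nonempty: "canonical_cotree t \<Longrightarrow> leaves t \<noteq> {}"
proof (induction t)
  case (Node b cs)
  then have "cs ! 0 \<in> set cs" by (auto intro!: nth_mem)
  with Node show ?case by auto
qed simp

lemma cadj_in_leaves: "cadj t x y \<Longrightarrow> x \<in> leaves t \<and> y \<in> leaves t"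
  by (induction t) (auto intro: nth_mem)

lemma cadj_sym: "cadj t x y = cadj t y x"
  by (induction t) auto

lemma canonical_cotree_subtrees: "canonical_cotree t \<Longrightarrow> s \<in> subtrees t \<Longrightarrow> canonical_cotree s"
  by (induction t) auto

lemma canonical_cotree_child: "canonical_cotree (Node b cs) \<Longrightarrow> c \<in> set cs \<Longrightarrow> canonical_cotree c"
  by simp

lemma leaves_children_disjoint:
  "canonical_cotree (Node b cs) \<Longrightarrow> c \<in> set cs \<Longrightarrow> c' \<in> set cs \<Longrightarrow> c \<noteq> c'
    \<Longrightarrow> leaves c \<inter> leaves c' = {}"
  by (auto simp: in_set_conv_nth)

lemma child_eq_if_common_leaf:
  "canonical_cotree (Node b cs) \<Longrightarrow> c \<in> set cs \<Longrightarrow> c' \<in> set cs \<Longrightarrow> x \<in> leaves c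
    \<Longrightarrow> x \<in> leaves c' \<Longrightarrow> c = c'"
  using leaves_children_disjoint by blast

lemma distinct_children: "canonical_cotree (Node b cs) \<Longrightarrow> distinct cs"
  unfolding distinct_conv_nth
  by (metis Int_absorb leaves_nonempty canonical_cotree.simps(2) nth_mem)

lemma cadj_Node_same_child:
  assumes can: "canonical_cotree (Node b cs)" and c: "c \<in> set cs"
    and x: "x \<in> leaves c" and z: "z \<in> leaves c"
  shows "cadj (Node b cs) x z = cadj c x z"
proof
  assume "cadj (Node b cs) x z"
  then consider c' where "c' \<in> set cs" "cadj c' x z"
    | i j where "i < length cs" "j < length cs" "i \<noteq> j" "x \<in> leaves (cs ! i)" "z \<in> leaves (cs ! j)"
    by auto
  then show "cadj c x z"
  proof cases
    case 1
    then have "c' = c"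
      using child_eq_if_common_leaf[OF can 1(1) c _ x] cadj_in_leaves[OF 1(2)] by simp
    with 1 show ?thesis by simp
  next
    case 2
    then have "cs ! i = c" "cs ! j = c"
      using child_eq_if_common_leaf[OF can nth_mem c] x z by blast+
    moreover have "leaves (cs ! i) \<inter> leaves (cs ! j) = {}" using can 2 by simp
    ultimately show ?thesis using x by simp
  qed
qed (use c in auto)

lemma cadj_Node_other_child:
  assumes can: "canonical_cotree (Node b cs)" and c: "c \<in> set cs" and c': "c' \<in> set cs"
    and "c \<noteq> c'" and x: "x \<in> leaves c" and z: "z \<in> leaves c'"
  shows "cadj (Node b cs) x z = b"
proof -
  have "\<not> cadj d x z" if "d \<in> set cs" for d
    using child_eq_if_common_leaf[OF can that c _ x] child_eq_if_common_leaf[OF can that c' _ z]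
      cadj_in_leaves[of d x z] \<open>c \<noteq> c'\<close> by blast
  moreover obtain i j where "i < length cs" "j < length cs" "cs ! i = c" "cs ! j = c'"
    using c c' by (meson in_set_conv_nth)
  ultimately show ?thesis using \<open>c \<noteq> c'\<close> x z by auto
qed

lemma cograph_leaves_child:
  assumes "canonical_cotree (Node b cs)" "c \<in> set cs" "cograph (leaves c) (cadj c)"
  shows "cograph (leaves c) (cadj (Node b cs))"
  using assms(3) by (rule cograph_cong) (use cadj_Node_same_child[OF assms(1,2)] in blast)

lemma cadj_Node_nth:
  assumes can: "canonical_cotree (Node b cs)" and "i < length cs" "j < length cs" "i \<noteq> j"
    and "x \<in> leaves (cs ! i)" "y \<in> leaves (cs ! j)"
  shows "cadj (Node b cs) x y = b"
  using assms distinct_children[OF can]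
  by (intro cadj_Node_other_child[OF can]) (auto simp: nth_eq_iff_index_eq)

lemma is_join_of_cographs_join_node:
  assumes can: "canonical_cotree (Node True cs)"
    and children: "\<And>c. c \<in> set cs \<Longrightarrow> cograph (leaves c) (cadj c)"
  shows "is_join_of_cographs (leaves (Node True cs)) (cadj (Node True cs))"
  unfolding is_join_of_cographs_def
proof (intro exI[of _ "map leaves cs"] conjI)
  show "\<forall>i<length (map leaves cs). map leaves cs ! i \<noteq> {} \<and> cograph (map leaves cs ! i) (cadj (Node True cs))"
    using leaves_nonempty[OF canonical_cotree_child[OF can nth_mem]]
      cograph_leaves_child[OF can nth_mem children[OF nth_mem]] by simp
  show "\<forall>i<length (map leaves cs). \<forall>j<length (map leaves cs). i \<noteq> j \<longrightarrow>
      (\<forall>x\<in>map leaves cs ! i. \<forall>y\<in>map leaves cs ! j. cadj (Node True cs) x y)"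
    using cadj_Node_nth[OF can] by simp
qed (use can in simp_all)

lemma cograph_leaves: "canonical_cotree t \<Longrightarrow> cograph (leaves t) (cadj t)"
proof (induction t)
  case (Leaf v)
  then show ?case by (auto intro: cograph.single)
next
  case (Node b cs)
  have can: "canonical_cotree (Node b cs)" by fact
  have children: "cograph (leaves c) (cadj c)" if "c \<in> set cs" for c
    using Node that can by simp
  show ?case
  proof (cases b)
    case True
    then have b: "b = True" by simp
    show ?thesis
      unfolding b
      by (rule cograph_if_join_of_cographs[OF is_join_of_cographs_join_node])
        (use can b children in auto)
  next
    case False
    have "cograph (\<Union>(set (map leaves cs))) (cadj (Node b cs))"
    proof (rule cograph.disj_union)
      show "\<forall>i<length (map leaves cs). map leaves cs ! i \<noteq> {} \<and> cograph (map leaves cs ! i) (cadj (Node b cs))"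
        using leaves_nonempty[OF canonical_cotree_child[OF can nth_mem]]
          cograph_leaves_child[OF can nth_mem children[OF nth_mem]] by simp
      show "\<forall>i<length (map leaves cs). \<forall>j<length (map leaves cs). i \<noteq> j \<longrightarrow>
          (\<forall>x\<in>map leaves cs ! i. \<forall>y\<in>map leaves cs ! j. \<not> cadj (Node b cs) x y)"
        using cadj_Node_nth[OF can] False by simp
    qed (use can in simp_all)
    then show ?thesis by (simp only: leaves.simps set_map)
  qed
qed

lemma non_nbhd_Node:
  assumes can: "canonical_cotree (Node b cs)" and c: "c \<in> set cs" and x: "x \<in> leaves c"
  shows "non_nbhd_T (Node b cs) x = (if b then {} else leaves (Node b cs) - leaves c) \<union> non_nbhd_T c x"
proof (rule set_eqI)
  fix z
  show "z \<in> non_nbhd_T (Node b cs) x \<longleftrightarrow>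
      z \<in> (if b then {} else leaves (Node b cs) - leaves c) \<union> non_nbhd_T c x"
  proof (cases "z \<in> leaves c")
    case True
    then show ?thesis
      using cadj_Node_same_child[OF can c x True] c by (auto simp: closed_nbhd_def simp del: cadj.simps)
  next
    case False
    show ?thesis
    proof (cases "z \<in> leaves (Node b cs)")
      case True
      then obtain c' where c': "c' \<in> set cs" "z \<in> leaves c'" by auto
      with False have "c \<noteq> c'" by blast
      then have "cadj (Node b cs) x z = b"
        using cadj_Node_other_child[OF can c c'(1) _ x c'(2)] by blast
      with False True x show ?thesis by (auto simp: closed_nbhd_def simp del: cadj.simps leaves.simps)
    qed (use False in \<open>auto simp: closed_nbhd_def simp del: cadj.simps leaves.simps\<close>)
  qed
qed

lemma is_clique_child_iff:
  assumes can: "canonical_cotree (Node b cs)" and c: "c \<in> set cs" and C: "C \<subseteq> leaves c"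
  shows "is_clique_T (Node b cs) C \<longleftrightarrow> is_clique_T c C"
proof -
  have "cadj (Node b cs) a a' = cadj c a a'" if "a \<in> C" "a' \<in> C" for a a'
    using cadj_Node_same_child[OF can c] C that by blast
  then show ?thesis
    using C c unfolding is_clique_def by auto
qed

lemma gamma_T_eq_1_iff:
  assumes "canonical_cotree t"
  shows "gamma_T t = 1 \<longleftrightarrow> (\<exists>v\<in>leaves t. non_nbhd_T t v = {})"
  using cadj_sym[of t]
  by (subst domination_number_eq_1_iff[OF finite_leaves leaves_nonempty[OF assms]])
    (auto simp: closed_nbhd_def)

lemma gamma_s_T_eq_1_iff:
  assumes "canonical_cotree t"
  shows "gamma_s_T t = 1 \<longleftrightarrow> is_clique_T t (leaves t)"
  by (rule secure_domination_number_eq_1_iff[OF finite_leaves leaves_nonempty[OF assms]])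

section \<open>Union vertices\<close>

lemma dominating_union_node_meets_child:
  assumes can: "canonical_cotree (Node False ds)"
    and dom: "dominating (leaves (Node False ds)) (cadj (Node False ds)) D" and d: "d \<in> set ds"
  shows "D \<inter> leaves d \<noteq> {}"
proof -
  obtain w where w: "w \<in> leaves d"
    using leaves_nonempty[OF canonical_cotree_child[OF can d]] by blast
  show ?thesis
  proof (cases "w \<in> D")
    case False
    have "w \<in> leaves (Node False ds) - D" using w d False by auto
    then obtain y where y: "y \<in> D" "cadj (Node False ds) w y"
      using dom unfolding dominating_def by blast
    have "y \<in> leaves (Node False ds)" using cadj_in_leaves[OF y(2)] by blast
    then obtain d' where d': "d' \<in> set ds" "y \<in> leaves d'" by auto
    have "d' = d"
      using cadj_Node_other_child[OF can d d'(1) _ w d'(2)] y(2) by blast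
    with y d' show ?thesis by blast
  qed (use w in blast)
qed

lemma clique_union_node_subset_child:
  assumes can: "canonical_cotree (Node False ds)"
    and C: "is_clique_T (Node False ds) C" and d: "d \<in> set ds" and a: "a \<in> C" "a \<in> leaves d"
  shows "C \<subseteq> leaves d"
proof
  fix z assume z: "z \<in> C"
  have "z \<in> leaves (Node False ds)"
    using conjunct1[OF C[unfolded is_clique_def]] z by (rule subsetD)
  then obtain d' where d': "d' \<in> set ds" "z \<in> leaves d'" by auto
  show "z \<in> leaves d"
  proof (cases "z = a")
    case False
    then have "cadj (Node False ds) a z"
      using conjunct2[OF C[unfolded is_clique_def]] a(1) z by simp
    then have "d' = d"
      using cadj_Node_other_child[OF can d d'(1) _ a(2) d'(2)] by blast
    with d' show ?thesis by simp
  qed (use a in simp)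
qed

lemma two_children_if_clique_non_nbhd_union_node:
  assumes can: "canonical_cotree (Node False ds)" and dk: "dk \<in> set ds" and x: "x \<in> leaves dk"
    and clique: "clique_non_nbhd_T (Node False ds) x"
  shows "\<exists>dl. set ds = {dk, dl} \<and> dl \<noteq> dk \<and> non_nbhd_T dk x = {} \<and> is_clique_T dl (leaves dl)"
proof -
  let ?u = "Node False ds"
  have N: "non_nbhd_T ?u x = (leaves ?u - leaves dk) \<union> non_nbhd_T dk x"
    using non_nbhd_Node[OF can dk x] by simp
  obtain dl where dl: "dl \<in> set ds" "dl \<noteq> dk"
  proof -
    have "card (set ds) \<ge> 2" using can distinct_card[OF distinct_children[OF can]] by simp
    then have "set ds \<noteq> {dk}" by auto
    with dk that show ?thesis by blast
  qed
  have disj: "leaves dk \<inter> leaves dl = {}"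
    using leaves_children_disjoint[OF can dk dl(1)] dl(2) by blast
  obtain w where w: "w \<in> leaves dl"
    using leaves_nonempty[OF canonical_cotree_child[OF can dl(1)]] by blast
  have "w \<in> non_nbhd_T ?u x" unfolding N using w dl(1) disj by auto
  then have sub: "non_nbhd_T ?u x \<subseteq> leaves dl"
    using clique_union_node_subset_child[OF can clique dl(1) _ w] by blast
  \<comment> \<open>all children other than dk lie in the non-neighbourhood of x, hence inside dl\<close>
  have "d = dl" if d: "d \<in> set ds" "d \<noteq> dk" for d
  proof -
    obtain w' where w': "w' \<in> leaves d"
      using leaves_nonempty[OF canonical_cotree_child[OF can d(1)]] by blast
    have "w' \<notin> leaves dk" using leaves_children_disjoint[OF can d(1) dk] d(2) w' by blast
    then have "w' \<in> leaves dl" using sub w' d(1) unfolding N by auto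
    then show ?thesis using child_eq_if_common_leaf[OF can d(1) dl(1) w'] by simp
  qed
  then have "set ds = {dk, dl}" using dk dl(1) by blast
  moreover have "non_nbhd_T dk x = {}" using sub disj unfolding N by blast
  moreover have "leaves dl \<subseteq> non_nbhd_T ?u x" unfolding N using dl(1) disj by auto
  then have "is_clique_T dl (leaves dl)"
    using is_clique_child_iff[OF can dl(1)] is_clique_subset[OF clique] by blast
  ultimately show ?thesis using dl(2) by blast
qed

lemma clique_non_nbhd_union_node_iff:
  assumes can: "canonical_cotree (Node False ds)" and dk: "dk \<in> set ds" and x: "x \<in> leaves dk"
  shows "clique_non_nbhd_T (Node False ds) x \<longleftrightarrow>
    (\<exists>dl. set ds = {dk, dl} \<and> dl \<noteq> dk \<and> non_nbhd_T dk x = {} \<and> is_clique_T dl (leaves dl))"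
proof
  assume "\<exists>dl. set ds = {dk, dl} \<and> dl \<noteq> dk \<and> non_nbhd_T dk x = {} \<and> is_clique_T dl (leaves dl)"
  then obtain dl where dl: "set ds = {dk, dl}" "dl \<noteq> dk" "non_nbhd_T dk x = {}"
    "is_clique_T dl (leaves dl)" by blast
  have "dl \<in> set ds" using dl(1) by blast
  have "non_nbhd_T (Node False ds) x = leaves dl"
    using non_nbhd_Node[OF can dk x] dl(1-3) leaves_children_disjoint[OF can dk \<open>dl \<in> set ds\<close>]
    by auto
  then show "clique_non_nbhd_T (Node False ds) x"
    using is_clique_child_iff[OF can \<open>dl \<in> set ds\<close>] dl(4) by simp
qed (rule two_children_if_clique_non_nbhd_union_node[OF can dk x])

lemma label_R_union_node_iff:
  assumes can: "canonical_cotree (Node False ds)"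
  shows "label_R (Node False ds) \<longleftrightarrow> (\<exists>dk dl. set ds = {dk, dl} \<and> dl \<noteq> dk \<and>
    (\<exists>x\<in>leaves dk. non_nbhd_T dk x = {}) \<and> is_clique_T dl (leaves dl))"
proof -
  have dist: "distinct ds" by (rule distinct_children[OF can])
  have "label_R (Node False ds) \<longleftrightarrow> length ds = 2 \<and>
      (\<exists>i<length ds. \<exists>j<length ds. i \<noteq> j \<and> gamma_T (ds ! i) = 1 \<and> gamma_s_T (ds ! j) = 1)"
    unfolding label_R_def by (cases "length ds = 2") simp_all
  also have "\<dots> \<longleftrightarrow> length ds = 2 \<and>
      (\<exists>dk\<in>set ds. \<exists>dl\<in>set ds. dk \<noteq> dl \<and> gamma_T dk = 1 \<and> gamma_s_T dl = 1)"
    using ex_two_nth_iff[OF dist, of "\<lambda>d. gamma_T d = 1" "\<lambda>d. gamma_s_T d = 1"] by simp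
  also have "\<dots> \<longleftrightarrow> (\<exists>dk dl. set ds = {dk, dl} \<and> dk \<noteq> dl \<and> gamma_T dk = 1 \<and> gamma_s_T dl = 1)"
    using distinct_length_2_iff[OF dist] by blast
  also have "\<dots> \<longleftrightarrow> (\<exists>dk dl. set ds = {dk, dl} \<and> dl \<noteq> dk \<and>
      (\<exists>x\<in>leaves dk. non_nbhd_T dk x = {}) \<and> is_clique_T dl (leaves dl))"
  proof -
    have "gamma_T d = 1 \<longleftrightarrow> (\<exists>x\<in>leaves d. non_nbhd_T d x = {})"
      and "gamma_s_T d = 1 \<longleftrightarrow> is_clique_T d (leaves d)" if "d \<in> set ds" for d
      using gamma_T_eq_1_iff gamma_s_T_eq_1_iff canonical_cotree_child[OF can that] by blast+
    then show ?thesis by (metis insertCI)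
  qed
  finally show ?thesis .
qed

lemma clique_non_nbhd_iff_leaf_or_label_R:
  assumes can: "canonical_cotree t" and "\<not> is_join_node t"
  shows "(\<exists>x\<in>leaves t. clique_non_nbhd_T t x) \<longleftrightarrow> is_leaf t \<or> label_R t"
proof (cases t)
  case (Leaf v)
  then show ?thesis by (simp add: is_clique_def closed_nbhd_def)
next
  case (Node b ds)
  with assms have t: "t = Node False ds" by simp
  with can have can': "canonical_cotree (Node False ds)" by simp
  have "(\<exists>x\<in>leaves t. clique_non_nbhd_T t x) \<longleftrightarrow>
      (\<exists>dk\<in>set ds. \<exists>x\<in>leaves dk. clique_non_nbhd_T (Node False ds) x)"
    unfolding t by simp
  also have "\<dots> \<longleftrightarrow> label_R t"
    unfolding t label_R_union_node_iff[OF can'] using clique_non_nbhd_union_node_iff[OF can']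
    by (metis insertCI)
  finally show ?thesis using t by simp
qed

lemma two_cliques_union_if_clique_dominating_pair_union_node:
  assumes can: "canonical_cotree (Node False ds)"
    and pair: "clique_dominating_pair_T (Node False ds) x y"
  shows "two_cliques_union (leaves (Node False ds)) (cadj (Node False ds))"
proof -
  let ?u = "Node False ds"
  have dom: "dominating (leaves ?u) (cadj ?u) {x, y}"
    and cx: "clique_non_nbhd_T ?u x" and cy: "clique_non_nbhd_T ?u y"
    using pair unfolding clique_dominating_pair_def by blast+
  have "x \<in> leaves ?u" using dom unfolding dominating_def by blast
  then obtain dk where dk: "dk \<in> set ds" "x \<in> leaves dk" by auto
  obtain dl where dl: "set ds = {dk, dl}" "dl \<noteq> dk" "is_clique_T dl (leaves dl)"
    using cx clique_non_nbhd_union_node_iff[OF can dk] by blast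
  have "dl \<in> set ds" using dl(1) by blast
  have disj: "leaves dk \<inter> leaves dl = {}"
    using leaves_children_disjoint[OF can dk(1) \<open>dl \<in> set ds\<close>] dl(2) by blast
  have "y \<in> leaves dl"
    using dominating_union_node_meets_child[OF can dom \<open>dl \<in> set ds\<close>] dk(2) disj by blast
  then obtain dk' where dk': "set ds = {dl, dk'}" "dk' \<noteq> dl" "is_clique_T dk' (leaves dk')"
    using cy clique_non_nbhd_union_node_iff[OF can \<open>dl \<in> set ds\<close>] by blast
  have "dk' = dk" using dk'(1,2) dl(1,2) by (metis doubleton_eq_iff)
  show ?thesis
    unfolding two_cliques_union_def
  proof (intro exI conjI)
    show "leaves dk \<noteq> {}" "leaves dl \<noteq> {}" using dk(2) \<open>y \<in> leaves dl\<close> by blast+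
    show "leaves dk \<inter> leaves dl = {}" by (fact disj)
    show "leaves dk \<union> leaves dl = leaves ?u" using dl(1) by auto
    show "is_clique_T ?u (leaves dk)"
      using is_clique_child_iff[OF can dk(1)] dk'(3) \<open>dk' = dk\<close> by simp
    show "is_clique_T ?u (leaves dl)"
      using is_clique_child_iff[OF can \<open>dl \<in> set ds\<close>] dl(3) by simp
    show "\<forall>a\<in>leaves dk. \<forall>b\<in>leaves dl. \<not> cadj ?u a b"
      using cadj_Node_other_child[OF can dk(1) \<open>dl \<in> set ds\<close>] dl(2) by auto
  qed
qed

lemma clique_dominating_pair_iff_label_R_two_cliques_union:
  assumes can: "canonical_cotree t" and nj: "\<not> is_join_node t"
  shows "(\<exists>x y. clique_dominating_pair_T t x y) \<longleftrightarrow>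
    label_R t \<and> two_cliques_union (leaves t) (cadj t)"
proof
  assume "\<exists>x y. clique_dominating_pair_T t x y"
  then obtain x y where pair: "clique_dominating_pair_T t x y" by blast
  then have "x \<in> leaves t" "y \<in> leaves t" "x \<noteq> y" "clique_non_nbhd_T t x"
    unfolding clique_dominating_pair_def dominating_def by blast+
  then have "\<not> is_leaf t" "label_R t \<or> is_leaf t"
    using clique_non_nbhd_iff_leaf_or_label_R[OF can nj] by (cases t; auto)+
  moreover obtain ds where t: "t = Node False ds"
    using \<open>\<not> is_leaf t\<close> nj by (cases t) auto
  have "two_cliques_union (leaves t) (cadj t)"
    unfolding t
    by (rule two_cliques_union_if_clique_dominating_pair_union_node[OF can[unfolded t] pair[unfolded t]])
  ultimately show "label_R t \<and> two_cliques_union (leaves t) (cadj t)" by blast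
qed (use two_cliques_union_imp_clique_dominating_pair in blast)

section \<open>Join vertices\<close>

lemma clique_non_nbhd_join_node_iff:
  assumes can: "canonical_cotree (Node True cs)" and c: "c \<in> set cs" and x: "x \<in> leaves c"
  shows "clique_non_nbhd_T (Node True cs) x \<longleftrightarrow> clique_non_nbhd_T c x"
proof -
  have "non_nbhd_T (Node True cs) x = non_nbhd_T c x"
    using non_nbhd_Node[OF can c x] by simp
  then show ?thesis using is_clique_child_iff[OF can c Diff_subset] by simp
qed

lemma dominating_join_node_other_children:
  assumes can: "canonical_cotree (Node True cs)" and ci: "ci \<in> set cs" and cj: "cj \<in> set cs"
    and "ci \<noteq> cj" and x: "x \<in> leaves ci" and y: "y \<in> leaves cj"
  shows "dominating (leaves (Node True cs)) (cadj (Node True cs)) {x, y}"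
  unfolding dominating_def
proof (intro conjI ballI)
  show "{x, y} \<subseteq> leaves (Node True cs)" using ci cj x y by auto
  fix z assume "z \<in> leaves (Node True cs) - {x, y}"
  then obtain ck where ck: "ck \<in> set cs" "z \<in> leaves ck" by auto
  show "\<exists>w\<in>{x, y}. cadj (Node True cs) z w"
  proof (cases "ck = ci")
    case True
    then show ?thesis using cadj_Node_other_child[OF can ck(1) cj _ ck(2) y] \<open>ci \<noteq> cj\<close> by auto
  next
    case False
    then show ?thesis using cadj_Node_other_child[OF can ck(1) ci _ ck(2) x] by auto
  qed
qed

lemma dominating_join_node_same_child_iff:
  assumes can: "canonical_cotree (Node True cs)" and c: "c \<in> set cs"
    and x: "x \<in> leaves c" and y: "y \<in> leaves c"
  shows "dominating (leaves (Node True cs)) (cadj (Node True cs)) {x, y} \<longleftrightarrow>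
    dominating (leaves c) (cadj c) {x, y}"
proof -
  have xy: "{x, y} \<subseteq> leaves c" "{x, y} \<subseteq> leaves (Node True cs)" using c x y by auto
  have same: "cadj (Node True cs) z w \<longleftrightarrow> cadj c z w" if "z \<in> leaves c" "w \<in> {x, y}" for z w
    using cadj_Node_same_child[OF can c that(1)] that(2) x y by blast
  show ?thesis
  proof
    assume dom: "dominating (leaves (Node True cs)) (cadj (Node True cs)) {x, y}"
    show "dominating (leaves c) (cadj c) {x, y}"
      unfolding dominating_def
    proof (intro conjI ballI)
      fix z assume z: "z \<in> leaves c - {x, y}"
      then have "z \<in> leaves (Node True cs) - {x, y}" using c by auto
      then obtain w where "w \<in> {x, y}" "cadj (Node True cs) z w"
        using dom unfolding dominating_def by blast
      then show "\<exists>w\<in>{x, y}. cadj c z w" using same z by blast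
    qed (fact xy(1))
  next
    assume dom: "dominating (leaves c) (cadj c) {x, y}"
    show "dominating (leaves (Node True cs)) (cadj (Node True cs)) {x, y}"
      unfolding dominating_def
    proof (intro conjI ballI)
      fix z assume z: "z \<in> leaves (Node True cs) - {x, y}"
      then obtain ck where ck: "ck \<in> set cs" "z \<in> leaves ck" by auto
      show "\<exists>w\<in>{x, y}. cadj (Node True cs) z w"
      proof (cases "ck = c")
        case True
        with z ck obtain w where "w \<in> {x, y}" "cadj c z w"
          using dom unfolding dominating_def by blast
        then show ?thesis using same True ck(2) by blast
      next
        case False
        then show ?thesis using cadj_Node_other_child[OF can ck(1) c _ ck(2) x] by auto
      qed
    qed (fact xy(2))
  qed
qed

lemma clique_dominating_pair_join_node_iff:
  assumes can: "canonical_cotree (Node True cs)"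
  shows "(\<exists>x y. clique_dominating_pair_T (Node True cs) x y) \<longleftrightarrow>
    (\<exists>ci\<in>set cs. \<exists>cj\<in>set cs. ci \<noteq> cj \<and>
        (\<exists>x\<in>leaves ci. clique_non_nbhd_T ci x) \<and> (\<exists>y\<in>leaves cj. clique_non_nbhd_T cj y))
    \<or> (\<exists>c\<in>set cs. \<exists>x y. clique_dominating_pair_T c x y)"
  (is "?pair \<longleftrightarrow> ?two_children \<or> ?one_child")
proof
  assume ?pair
  then obtain x y where pair: "clique_dominating_pair_T (Node True cs) x y" by blast
  then have dom: "dominating (leaves (Node True cs)) (cadj (Node True cs)) {x, y}"
    and "x \<noteq> y" "clique_non_nbhd_T (Node True cs) x" "clique_non_nbhd_T (Node True cs) y"
    unfolding clique_dominating_pair_def by blast+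
  moreover obtain ci cj where ci: "ci \<in> set cs" "x \<in> leaves ci" and cj: "cj \<in> set cs" "y \<in> leaves cj"
    using dom unfolding dominating_def by auto
  ultimately have "clique_non_nbhd_T ci x" "clique_non_nbhd_T cj y"
    using clique_non_nbhd_join_node_iff[OF can] by blast+
  show "?two_children \<or> ?one_child"
  proof (cases "ci = cj")
    case True
    then have "dominating (leaves ci) (cadj ci) {x, y}"
      using dominating_join_node_same_child_iff[OF can ci] cj(2) dom by blast
    then have "clique_dominating_pair_T ci x y"
      unfolding clique_dominating_pair_def
      using \<open>x \<noteq> y\<close> \<open>clique_non_nbhd_T ci x\<close> \<open>clique_non_nbhd_T cj y\<close> True by blast
    with ci(1) show ?thesis by blast
  next
    case False
    with ci cj \<open>clique_non_nbhd_T ci x\<close> \<open>clique_non_nbhd_T cj y\<close> show ?thesis by blast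
  qed
next
  assume "?two_children \<or> ?one_child"
  then show ?pair
  proof
    assume ?two_children
    then obtain ci cj x y where ci: "ci \<in> set cs" "x \<in> leaves ci" "clique_non_nbhd_T ci x"
      and cj: "cj \<in> set cs" "y \<in> leaves cj" "clique_non_nbhd_T cj y" and "ci \<noteq> cj"
      by blast
    have "x \<noteq> y" using leaves_children_disjoint[OF can ci(1) cj(1) \<open>ci \<noteq> cj\<close>] ci(2) cj(2) by blast
    then have "clique_dominating_pair_T (Node True cs) x y"
      unfolding clique_dominating_pair_def
      using dominating_join_node_other_children[OF can ci(1) cj(1) \<open>ci \<noteq> cj\<close> ci(2) cj(2)]
        clique_non_nbhd_join_node_iff[OF can] ci cj by blast
    then show ?pair by blast
  next
    assume ?one_child
    then obtain c x y where c: "c \<in> set cs" and pair: "clique_dominating_pair_T c x y" by blast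
    then have "x \<in> leaves c" "y \<in> leaves c"
      unfolding clique_dominating_pair_def dominating_def by blast+
    with pair have "clique_dominating_pair_T (Node True cs) x y"
      unfolding clique_dominating_pair_def
      using dominating_join_node_same_child_iff[OF can c] clique_non_nbhd_join_node_iff[OF can c]
      by blast
    then show ?pair by blast
  qed
qed

theorem lemma3:
  fixes T c :: "'a cotree"
  assumes "canonical_cotree T"
    and "c \<in> subtrees T"
    and "is_join_node c"
  shows "property_P (leaves c) (cadj c) \<longleftrightarrow>
    (length (children c) \<ge> 2 \<and>
     ((\<exists>i < length (children c). \<exists>j < length (children c). i \<noteq> j \<and>
          (is_leaf (children c ! i) \<or> label_R (children c ! i)) \<and>
          (is_leaf (children c ! j) \<or> label_R (children c ! j)))
      \<or> (\<exists>u \<in> set (children c). label_R u \<and> two_cliques_union (leaves u) (cadj u))))"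
proof -
  obtain cs where c: "c = Node True cs" using assms(3) by (cases c) auto
  have can: "canonical_cotree (Node True cs)" using canonical_cotree_subtrees[OF assms(1,2)] c by simp
  have child: "canonical_cotree ci" "\<not> is_join_node ci" if "ci \<in> set cs" for ci
  proof -
    show "canonical_cotree ci" using can that by simp
    show "\<not> is_join_node ci" using can that by (cases ci) auto
  qed
  have "is_join_of_cographs (leaves c) (cadj c)"
    unfolding c using is_join_of_cographs_join_node[OF can cograph_leaves[OF child(1)]] .
  then have "property_P (leaves c) (cadj c) \<longleftrightarrow> (\<exists>x y. clique_dominating_pair_T c x y)"
    unfolding property_P_iff by blast
  also have "\<dots> \<longleftrightarrow>
      (\<exists>ci\<in>set cs. \<exists>cj\<in>set cs. ci \<noteq> cj \<and> (is_leaf ci \<or> label_R ci) \<and> (is_leaf cj \<or> label_R cj))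
      \<or> (\<exists>u\<in>set cs. label_R u \<and> two_cliques_union (leaves u) (cadj u))"
    unfolding c clique_dominating_pair_join_node_iff[OF can]
    using clique_non_nbhd_iff_leaf_or_label_R[OF child]
      clique_dominating_pair_iff_label_R_two_cliques_union[OF child] by (simp cong: bex_cong)
  also have "\<dots> \<longleftrightarrow> length cs \<ge> 2 \<and>
      ((\<exists>i < length cs. \<exists>j < length cs. i \<noteq> j \<and>
          (is_leaf (cs ! i) \<or> label_R (cs ! i)) \<and> (is_leaf (cs ! j) \<or> label_R (cs ! j)))
      \<or> (\<exists>u\<in>set cs. label_R u \<and> two_cliques_union (leaves u) (cadj u)))"
  proof -
    have "length cs \<ge> 2" using can by simp
    then show ?thesis
      using ex_two_nth_iff[OF distinct_children[OF can],
          of "\<lambda>d. is_leaf d \<or> label_R d" "\<lambda>d. is_leaf d \<or> label_R d"] by simp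
  qed
  finally show ?thesis unfolding c children.simps .
qed

end
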